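(* Let $\theta_1,\theta_2>0$, $\theta=\theta_1+\theta_2$, $p=\theta_1/\theta$, and let $\{\xi(t)\}$ be the two-type star-shaped Fleming–Viot process with mutation, with generator \[ \mathcal{L}g(x)=x\big(g(1)-g(x)\big)+(1-x)\big(g(0)-g(x)\big)+\tfrac12(\theta_1-\theta x)g'(x) \] and $\xi(0)=x$. For $k\ge1$ let $f_k(\xi;x,t)$ be the joint (sub-)density that there are exactly $k$ population replacements in $(0,t)$ and that $\xi(t)=\xi$. Then \[ f_k(\xi;x,t)=\begin{cases}\dfrac{2k\,r_1(\xi;t)}{\theta t(\xi-p)}\Big(1+\dfrac{2}{\theta t}\log\Big(\dfrac{\xi-p}{1-p}\Big)\Big)^{k-1}\dfrac{t^k}{k!}e^{-t}, & \xi>p+(1-p)e^{-\theta t/2},\\[10pt] \dfrac{2k\,r_2(\xi;t)}{\theta t(p-\xi)}\Big(1+\dfrac{2}{\theta t}\log\Big(\dfrac{p-\xi}{p}\Big)\Big)^{k-1}\dfrac{t^k}{k!}e^{-t}, & \xi<p(1-e^{-\theta t/2}),\end{cases} \] where \[ r_1(\xi;t)=p+(x-p)e^{-\theta t/2}\frac{1-p}{\xi-p},\qquad r_2(\xi;t)=1-p-(x-p)e^{-\theta t/2}\frac{p}{p-\xi}. \] Moreover the density $f(\xi;x,t)$ of the continuous part of the distribution of $\xi(t)$ satisfies $f(\xi;x,t)=\sum_{k=1}^\infty f_k(\xi;x,t)$.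
   Context: In the process, at the times of a rate-1 Poisson process the whole population is replaced by the offspring of a single individual chosen at random (type 1 with probability equal to the current type-1 frequency); between replacements, mutation at rate $\theta/2$ per line (new type 1 with probability $p$) drives the type-1 frequency deterministically. $\xi(t)$ is the frequency of type 1. *)

theory Defs
  imports "HOL-Probability.Probability"
begin

text \<open>Deterministic mutation flow between replacements:
  dx/ds = (theta1 - theta x)/2 = (theta/2)(p - x), so x(s) = p + (x0 - p) e^{-theta s/2}.\<close>
definition sfv_flow :: "real \<Rightarrow> real \<Rightarrow> real \<Rightarrow> real \<Rightarrow> real" where
  "sfv_flow \<theta> p z s = p + (z - p) * exp (- \<theta> * s / 2)"

definition sfv_jump :: "(nat \<Rightarrow> 'a \<Rightarrow> real) \<Rightarrow> nat \<Rightarrow> 'a \<Rightarrow> real" where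
  "sfv_jump X n \<omega> = (\<Sum>i<n. X i \<omega>)"

definition sfv_count :: "(nat \<Rightarrow> 'a \<Rightarrow> real) \<Rightarrow> real \<Rightarrow> 'a \<Rightarrow> nat" where
  "sfv_count X t \<omega> = card {n. 1 \<le> n \<and> sfv_jump X n \<omega> \<le> t}"

text \<open>Value of the type-1 frequency right after the n-th replacement (n = 0: initial value x).
  At replacement n+1 the new frequency is 1 iff the uniform variable U n falls below the
  current type-1 frequency (i.e. type 1 is chosen with probability equal to that frequency).\<close>
fun sfv_post :: "real \<Rightarrow> real \<Rightarrow> real \<Rightarrow> (nat \<Rightarrow> 'a \<Rightarrow> real) \<Rightarrow> (nat \<Rightarrow> 'a \<Rightarrow> real)
    \<Rightarrow> nat \<Rightarrow> 'a \<Rightarrow> real" where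
  "sfv_post \<theta> p x X U 0 \<omega> = x"
| "sfv_post \<theta> p x X U (Suc n) \<omega> =
     (if U n \<omega> < sfv_flow \<theta> p (sfv_post \<theta> p x X U n \<omega>) (X n \<omega>) then 1 else 0)"

definition sfv_proc :: "real \<Rightarrow> real \<Rightarrow> real \<Rightarrow> (nat \<Rightarrow> 'a \<Rightarrow> real) \<Rightarrow> (nat \<Rightarrow> 'a \<Rightarrow> real)
    \<Rightarrow> real \<Rightarrow> 'a \<Rightarrow> real" where
  "sfv_proc \<theta> p x X U t \<omega> =
     (let k = sfv_count X t \<omega> in
      sfv_flow \<theta> p (sfv_post \<theta> p x X U k \<omega>) (t - sfv_jump X k \<omega>))"

definition sfv_fk :: "real \<Rightarrow> real \<Rightarrow> real \<Rightarrow> real \<Rightarrow> nat \<Rightarrow> real \<Rightarrow> real" where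
  "sfv_fk \<theta> p x t k \<xi> =
     (let e = exp (- \<theta> * t / 2);
          r1 = p + (x - p) * e * (1 - p) / (\<xi> - p);
          r2 = 1 - p - (x - p) * e * p / (p - \<xi>)
      in if p + (1 - p) * e < \<xi> \<and> \<xi> < 1 then
           2 * real k * r1 / (\<theta> * t * (\<xi> - p))
             * (1 + 2 / (\<theta> * t) * ln ((\<xi> - p) / (1 - p))) ^ (k - 1)
             * t ^ k / fact k * exp (- t)
         else if 0 < \<xi> \<and> \<xi> < p * (1 - e) then
           2 * real k * r2 / (\<theta> * t * (p - \<xi>))
             * (1 + 2 / (\<theta> * t) * ln ((p - \<xi>) / p)) ^ (k - 1)
             * t ^ k / fact k * exp (- t)
         else 0)"

end

theory Submission
  imports Defs
begin

text \<open>Given the inter-replacement times, the type drawn at a replacement is 1 with probability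
  equal to the current frequency, and the mutation flow is affine. Averaging over the drawn
  types therefore shows that the frequency right after the k-th replacement is 1 with
  probability p + (x - p) exp(-theta S/2), where S is the k-th replacement time: this is the
  flow started at x and run for time S. On the event of exactly k >= 1 replacements, xi(t) is the
  flow started at 1 or at 0 and run for the remaining time t - S. The time S is Erlang
  distributed and independent of the next waiting time, whose tail contributes exp(-(t - S)).
  Substituting xi = p + (eps - p) exp(-theta (t - s)/2), eps in {0, 1}, for the value s of S
  turns the resulting integral into f_k. Summing over k gives the continuous part; the atom
  exp(-t) at the unperturbed flow is the event of no replacement.\<close>

lemma (in prob_space) nn_integral_indep_component:
  fixes Y :: "'i \<Rightarrow> 'a \<Rightarrow> real" and F :: "real \<times> ('i \<Rightarrow> real) \<Rightarrow> ennreal"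
  assumes ind: "indep_vars (\<lambda>_. borel) Y UNIV"
  assumes F[measurable]: "F \<in> borel_measurable (borel \<Otimes>\<^sub>M PiM (UNIV - {i}) (\<lambda>_. borel))"
  shows "(\<integral>\<^sup>+\<omega>. F (Y i \<omega>, restrict (\<lambda>j. Y j \<omega>) (UNIV - {i})) \<partial>M) =
    (\<integral>\<^sup>+v. (\<integral>\<^sup>+\<omega>. F (Y i \<omega>, v) \<partial>M)
       \<partial>distr M (PiM (UNIV - {i}) (\<lambda>_. borel)) (\<lambda>\<omega>. restrict (\<lambda>j. Y j \<omega>) (UNIV - {i})))"
proof -
  let ?V = "\<lambda>\<omega>. restrict (\<lambda>j. Y j \<omega>) (UNIV - {i})"
  let ?W = "\<lambda>\<omega>. restrict (\<lambda>j. Y j \<omega>) {i}"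
  let ?P = "PiM (UNIV - {i}) (\<lambda>_. borel::real measure)"
  let ?Q = "PiM {i} (\<lambda>_. borel::real measure)"
  have "indep_var ?Q ?W ?P ?V"
    by (rule indep_var_restrict[OF ind]) auto
  then have rv: "random_variable ?Q ?W" "random_variable ?P ?V"
    and eq: "distr M ?Q ?W \<Otimes>\<^sub>M distr M ?P ?V = distr M (?Q \<Otimes>\<^sub>M ?P) (\<lambda>x. (?W x, ?V x))"
    by (simp_all add: indep_var_distribution_eq)
  interpret D1: prob_space "distr M ?Q ?W" using rv(1) by (rule prob_space_distr)
  interpret D2: prob_space "distr M ?P ?V" using rv(2) by (rule prob_space_distr)
  interpret PP: pair_sigma_finite "distr M ?Q ?W" "distr M ?P ?V" ..
  have [measurable]: "(\<lambda>z. F ((fst z) i, snd z)) \<in> borel_measurable (?Q \<Otimes>\<^sub>M ?P)"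
    by measurable
  have "(\<integral>\<^sup>+\<omega>. F (Y i \<omega>, ?V \<omega>) \<partial>M) = (\<integral>\<^sup>+\<omega>. F ((?W \<omega>) i, ?V \<omega>) \<partial>M)" by simp
  also have "\<dots> = (\<integral>\<^sup>+z. F ((fst z) i, snd z) \<partial>distr M (?Q \<Otimes>\<^sub>M ?P) (\<lambda>x. (?W x, ?V x)))"
    using rv by (subst nn_integral_distr) (auto intro!: measurable_Pair)
  also have "\<dots> = (\<integral>\<^sup>+z. F ((fst z) i, snd z) \<partial>(distr M ?Q ?W \<Otimes>\<^sub>M distr M ?P ?V))"
    by (simp add: eq)
  also have "\<dots> = (\<integral>\<^sup>+v. (\<integral>\<^sup>+w. F (w i, v) \<partial>distr M ?Q ?W) \<partial>distr M ?P ?V)"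
    by (subst PP.nn_integral_snd[symmetric]) auto
  also have "\<dots> = (\<integral>\<^sup>+v. (\<integral>\<^sup>+\<omega>. F (Y i \<omega>, v) \<partial>M) \<partial>distr M ?P ?V)"
  proof (rule nn_integral_cong)
    fix v assume "v \<in> space (distr M ?P ?V)"
    then have [measurable]: "v \<in> space ?P" by simp
    show "(\<integral>\<^sup>+w. F (w i, v) \<partial>distr M ?Q ?W) = (\<integral>\<^sup>+\<omega>. F (Y i \<omega>, v) \<partial>M)"
      using rv by (subst nn_integral_distr) auto
  qed
  finally show ?thesis .
qed

lemma ennreal_add_mult_distrib:
  fixes a b c :: real
  assumes "0 \<le> a" "0 \<le> b" "0 \<le> c"
  shows "ennreal (a + b * c) * G = ennreal a * G + ennreal b * (ennreal c * G)"
  using assms by (simp add: ennreal_plus ennreal_mult distrib_right mult.assoc)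

lemma Suc_power_fact_rearrange:
  fixes H D B t E :: real
  shows "2 * real (Suc k) * H / D * B ^ k * t ^ Suc k / fact (Suc k) * E =
    (2 * H / D * t * E) * (inverse (fact k) * (B * t) ^ k)"
proof -
  have "fact (Suc k) = real (Suc k) * (fact k :: real)" by (simp del: of_nat_Suc)
  then show ?thesis
    by (simp add: divide_inverse power_mult_distrib mult_ac del: of_nat_Suc)
qed

lemma sfv_flow_bounds:
  assumes "0 \<le> \<theta>" "0 \<le> p" "p \<le> 1" "0 \<le> z" "z \<le> 1" "0 \<le> s"
  shows "0 \<le> sfv_flow \<theta> p z s \<and> sfv_flow \<theta> p z s \<le> 1"
proof -
  define e where "e = exp (- \<theta> * s / 2)"
  have e: "0 < e" "e \<le> 1" using assms by (auto simp: e_def)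
  have flow: "sfv_flow \<theta> p z s = p * (1 - e) + z * e"
    by (simp add: sfv_flow_def e_def algebra_simps)
  have "p * (1 - e) + z * e \<le> 1 * (1 - e) + 1 * e"
    using e assms by (intro add_mono mult_right_mono) auto
  then show ?thesis
    using e assms by (simp add: flow)
qed

lemma sfv_post_measurable[measurable]:
  assumes [measurable]: "\<And>n. X n \<in> borel_measurable N" "\<And>n. U n \<in> borel_measurable N"
  shows "sfv_post \<theta> p x X U k \<in> borel_measurable N"
proof (induction k)
  case 0 then show ?case by (simp add: sfv_post.simps(1)[abs_def])
next
  case (Suc k)
  note [measurable] = Suc
  show ?case unfolding sfv_post.simps(2)[abs_def] sfv_flow_def by measurable
qed

lemma sfv_jump_measurable[measurable]:
  assumes [measurable]: "\<And>n. X n \<in> borel_measurable N"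
  shows "sfv_jump X k \<in> borel_measurable N"
  unfolding sfv_jump_def[abs_def] by measurable

lemma sfv_post_cong:
  assumes "\<And>n. X' n v = X n \<omega>" "\<And>j. j < k \<Longrightarrow> U' j v = U j \<omega>"
  shows "sfv_post \<theta> p x X' U' k v = sfv_post \<theta> p x X U k \<omega>"
  using assms by (induction k) auto

lemma sfv_jump_cong:
  assumes "\<And>j. j < k \<Longrightarrow> X' j v = X j \<omega>"
  shows "sfv_jump X' k v = sfv_jump X k \<omega>"
  using assms unfolding sfv_jump_def by simp

text \<open>The \<open>X\<close>- and \<open>U\<close>-coordinates of a vector indexed by \<open>Inl\<close>/\<open>Inr\<close> from which
  coordinate \<open>i\<close> has been removed; the removed coordinate reads as 0.\<close>
definition X_coord :: "nat + nat \<Rightarrow> nat \<Rightarrow> (nat + nat \<Rightarrow> real) \<Rightarrow> real" where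
  "X_coord i n v = (if Inl n = i then 0 else v (Inl n))"

definition U_coord :: "nat + nat \<Rightarrow> nat \<Rightarrow> (nat + nat \<Rightarrow> real) \<Rightarrow> real" where
  "U_coord i n v = (if Inr n = i then 0 else v (Inr n))"

lemma X_coord_measurable[measurable]:
  "X_coord i n \<in> borel_measurable (PiM (UNIV - {i}) (\<lambda>_. borel))"
  by (cases "Inl n = i") (auto simp: X_coord_def[abs_def])

lemma U_coord_measurable[measurable]:
  "U_coord i n \<in> borel_measurable (PiM (UNIV - {i}) (\<lambda>_. borel))"
  by (cases "Inr n = i") (auto simp: U_coord_def[abs_def])

lemma X_coord_seq_measurable[measurable]:
  "(\<lambda>v n. X_coord i n v) \<in> measurable (PiM (UNIV - {i}) (\<lambda>_. borel)) (PiM UNIV (\<lambda>_. borel))"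
proof -
  have "(\<lambda>v. restrict (\<lambda>n. X_coord i n v) UNIV)
      \<in> measurable (PiM (UNIV - {i}) (\<lambda>_. borel)) (PiM UNIV (\<lambda>_. borel))"
    by (rule measurable_restrict) simp
  then show ?thesis by (simp add: restrict_def)
qed

lemma sum_lessThan_measurable[measurable]:
  "(\<lambda>xs::nat \<Rightarrow> real. sum xs {..<k}) \<in> borel_measurable (PiM UNIV (\<lambda>_. borel))"
  by (rule borel_measurable_sum[where f="\<lambda>i xs. xs i", simplified]) simp

locale star_fleming_viot = prob_space M for M :: "'a measure" +
  fixes X U :: "nat \<Rightarrow> 'a \<Rightarrow> real" and \<theta> p x t :: real
  assumes indep: "indep_vars (\<lambda>_. borel) (\<lambda>i. case i of Inl n \<Rightarrow> X n | Inr n \<Rightarrow> U n) UNIV"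
    and X_distr: "\<And>n. distributed M lborel (X n) (exponential_density 1)"
    and U_distr: "\<And>n. distributed M lborel (U n) (\<lambda>u. indicator {0..1} u / measure lborel {0..1::real})"
    and \<theta>_pos: "0 < \<theta>" and p_pos: "0 < p" and p_less_1: "p < 1"
    and x_nonneg: "0 \<le> x" and x_le_1: "x \<le> 1" and t_pos: "0 < t"
begin

definition "Y i = (case i of Inl n \<Rightarrow> X n | Inr n \<Rightarrow> U n)"
definition "others i \<omega> = restrict (\<lambda>j. Y j \<omega>) (UNIV - {i})"
definition "S k \<omega> = sfv_jump X k \<omega>"
definition "post k \<omega> = sfv_post \<theta> p x X U k \<omega>"

abbreviation "PS i \<equiv> PiM (UNIV - {i}) (\<lambda>_. borel::real measure)"
abbreviation "N \<equiv> sfv_count X t"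
abbreviation "proc \<equiv> sfv_proc \<theta> p x X U t"

lemma X_measurable[measurable]: "X n \<in> borel_measurable M"
  using distributed_measurable[OF X_distr[of n]] by simp

lemma U_measurable[measurable]: "U n \<in> borel_measurable M"
  using distributed_measurable[OF U_distr[of n]] by simp

lemma Y_measurable[measurable]: "Y i \<in> borel_measurable M"
  by (cases i) (auto simp: Y_def)

lemma others_measurable[measurable]: "others i \<in> measurable M (PS i)"
  unfolding others_def by (rule measurable_restrict) simp

lemma X_seq_measurable[measurable]: "(\<lambda>\<omega> n. X n \<omega>) \<in> measurable M (PiM UNIV (\<lambda>_. borel))"
proof -
  have "(\<lambda>\<omega>. restrict (\<lambda>n. X n \<omega>) UNIV) \<in> measurable M (PiM UNIV (\<lambda>_. borel))"
    by (rule measurable_restrict) simp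
  then show ?thesis by (simp add: restrict_def)
qed

lemma post_measurable[measurable]: "post k \<in> borel_measurable M"
  unfolding post_def[abs_def] by measurable

lemma S_measurable[measurable]: "S k \<in> borel_measurable M"
  unfolding S_def[abs_def] by measurable

lemma S_0: "S 0 \<omega> = 0"
  by (simp add: S_def sfv_jump_def)

lemma S_Suc: "S (Suc k) \<omega> = S k \<omega> + X k \<omega>"
  by (simp add: S_def sfv_jump_def)

lemma S_eq_sum: "S k \<omega> = (\<Sum>i<k. X i \<omega>)"
  by (simp add: S_def sfv_jump_def)

lemma X_coord_others: "X_coord i n (others i \<omega>) = (if Inl n = i then 0 else X n \<omega>)"
  by (auto simp: X_coord_def others_def Y_def)

lemma U_coord_others: "U_coord i n (others i \<omega>) = (if Inr n = i then 0 else U n \<omega>)"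
  by (auto simp: U_coord_def others_def Y_def)

lemma AE_X_pos: "AE \<omega> in M. \<forall>n. 0 < X n \<omega>"
proof -
  have "AE \<omega> in M. 0 < X n \<omega>" for n
  proof -
    have "prob {\<omega>\<in>space M. X n \<omega> \<le> 0} = 0"
      using exponential_distributedD_le[OF X_distr[of n], of 0] by simp
    then show ?thesis
      by (subst AE_iff_measurable[OF _ refl]) (auto simp: emeasure_eq_measure not_less)
  qed
  then show ?thesis by (simp add: AE_all_countable)
qed

lemma AE_S_nonneg: "AE \<omega> in M. \<forall>k. 0 \<le> S k \<omega>"
  using AE_X_pos by eventually_elim (simp add: S_eq_sum sum_nonneg less_imp_le)

lemma emeasure_X_greater: "0 \<le> a \<Longrightarrow> emeasure M {\<omega>\<in>space M. a < X n \<omega>} = ennreal (exp (- a))"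
  using exponential_distributedD_gt[OF X_distr[of n], of a] by (simp add: emeasure_eq_measure)

lemma emeasure_U_less:
  assumes "0 \<le> c" "c \<le> 1"
  shows "emeasure M {\<omega>\<in>space M. U n \<omega> < c} = ennreal c"
proof -
  have "emeasure M {\<omega>\<in>space M. U n \<omega> < c} = emeasure M (U n -` {..<c} \<inter> space M)"
    by (intro arg_cong[where f="emeasure M"]) auto
  also have "\<dots> = (\<integral>\<^sup>+u. ennreal (indicator {0..1} u / measure lborel {0..1::real})
      * indicator {..<c} u \<partial>lborel)"
    by (rule distributed_emeasure[OF U_distr]) simp
  also have "\<dots> = (\<integral>\<^sup>+u. indicator {0..<c} u \<partial>lborel)"
    using assms by (intro nn_integral_cong) (auto split: split_indicator)
  also have "\<dots> = ennreal c" using assms by simp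
  finally show ?thesis .
qed

lemma emeasure_U_not_less:
  assumes "0 \<le> c" "c \<le> 1"
  shows "emeasure M {\<omega>\<in>space M. \<not> U n \<omega> < c} = ennreal (1 - c)"
proof -
  have "emeasure M {\<omega>\<in>space M. \<not> U n \<omega> < c} = emeasure M (space M - {\<omega>\<in>space M. U n \<omega> < c})"
    by (intro arg_cong[where f="emeasure M"]) auto
  also have "\<dots> = 1 - ennreal c"
    by (subst emeasure_compl) (auto simp: emeasure_U_less[OF assms] emeasure_space_1)
  also have "\<dots> = ennreal (1 - c)"
    using assms by (simp add: ennreal_minus ennreal_1[symmetric] del: ennreal_1)
  finally show ?thesis .
qed

lemma nn_integral_U_choice:
  assumes "0 \<le> c" "c \<le> 1"
  shows "(\<integral>\<^sup>+\<omega>. ennreal (if (U k \<omega> < c) = b then 1 else 0) * a \<partial>M) = ennreal (if b then c else 1 - c) * a"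
proof -
  have "(\<integral>\<^sup>+\<omega>. ennreal (if (U k \<omega> < c) = b then 1 else 0) * a \<partial>M)
      = (\<integral>\<^sup>+\<omega>. a * indicator {\<omega>\<in>space M. (U k \<omega> < c) = b} \<omega> \<partial>M)"
    by (intro nn_integral_cong) (auto split: split_indicator)
  also have "\<dots> = a * emeasure M {\<omega>\<in>space M. (U k \<omega> < c) = b}"
    by (rule nn_integral_cmult_indicator) measurable
  also have "emeasure M {\<omega>\<in>space M. (U k \<omega> < c) = b} = ennreal (if b then c else 1 - c)"
    using assms by (cases b) (simp_all add: emeasure_U_less emeasure_U_not_less)
  finally show ?thesis by (simp add: mult.commute)
qed

lemma nn_integral_split_coordinate:
  fixes F :: "real \<times> ((nat + nat) \<Rightarrow> real) \<Rightarrow> ennreal"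
  assumes [measurable]: "F \<in> borel_measurable (borel \<Otimes>\<^sub>M PS i)"
  shows "(\<integral>\<^sup>+\<omega>. F (Y i \<omega>, others i \<omega>) \<partial>M)
    = (\<integral>\<^sup>+v. (\<integral>\<^sup>+\<omega>. F (Y i \<omega>, v) \<partial>M) \<partial>distr M (PS i) (others i))"
  unfolding others_def
  by (rule nn_integral_indep_component) (use indep in \<open>simp_all add: Y_def[abs_def]\<close>)

lemma indep_var_others:
  assumes [measurable]: "f \<in> borel_measurable (PS i)"
  shows "indep_var borel (\<lambda>\<omega>. f (others i \<omega>)) borel (Y i)"
proof -
  have "indep_var (PS i) (\<lambda>\<omega>. restrict (\<lambda>j. Y j \<omega>) (UNIV - {i}))
      (PiM {i} (\<lambda>_. borel)) (\<lambda>\<omega>. restrict (\<lambda>j. Y j \<omega>) {i})"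
    by (rule indep_var_restrict) (use indep in \<open>auto simp: Y_def[abs_def]\<close>)
  then have "indep_var borel (f \<circ> (\<lambda>\<omega>. restrict (\<lambda>j. Y j \<omega>) (UNIV - {i})))
      borel ((\<lambda>w. w i) \<circ> (\<lambda>\<omega>. restrict (\<lambda>j. Y j \<omega>) {i}))"
    by (rule indep_var_compose) auto
  then show ?thesis by (simp add: comp_def others_def)
qed

lemma post_bounds: "0 \<le> post k \<omega> \<and> post k \<omega> \<le> 1"
  by (cases k) (auto simp: post_def x_nonneg x_le_1)

lemma post_Suc_01: "post (Suc k) \<omega> = 0 \<or> post (Suc k) \<omega> = 1"
  by (auto simp: post_def)

text \<open>For \<open>k \<ge> 1\<close>, \<open>is_type True k\<close> and \<open>is_type False k\<close> are the indicators of the frequency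
  being 1 resp. 0 right after the \<open>k\<close>-th replacement. \<open>type_prob b (exp (- \<theta> * s / 2))\<close> is
  the flow from \<open>x\<close> run for time \<open>s\<close>, resp. its complement.\<close>
definition "is_type b k \<omega> = (if b then post k \<omega> else 1 - post k \<omega>)"
definition "type_prob b z = (if b then p + (x - p) * z else 1 - p - (x - p) * z)"

lemma is_type_nonneg: "0 \<le> is_type b k \<omega>"
  using post_bounds[of k \<omega>] by (auto simp: is_type_def)

lemma is_type_Suc:
  "is_type b (Suc k) \<omega> = (if (U k \<omega> < sfv_flow \<theta> p (post k \<omega>) (X k \<omega>)) = b then 1 else 0)"
  by (auto simp: is_type_def post_def)

lemma type_prob_nonneg:
  assumes "0 \<le> z" "z \<le> 1"
  shows "0 \<le> type_prob b z"
proof -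
  have "type_prob b z = (if b then p * (1 - z) + x * z else (1 - p) * (1 - z) + (1 - x) * z)"
    by (simp add: type_prob_def algebra_simps)
  also have "0 \<le> \<dots>"
    using assms p_pos p_less_1 x_nonneg x_le_1 by (auto intro!: add_nonneg_nonneg mult_nonneg_nonneg)
  finally show ?thesis .
qed

lemma nn_integral_is_type_Suc:
  assumes [measurable]: "G \<in> borel_measurable (PiM UNIV (\<lambda>_. borel::real measure))"
  shows "(\<integral>\<^sup>+\<omega>. ennreal (is_type b (Suc k) \<omega>) * G (\<lambda>n. X n \<omega>) \<partial>M) =
    (\<integral>\<^sup>+\<omega>. ennreal (type_prob b 0 * (1 - exp (- \<theta> * X k \<omega> / 2))
       + is_type b k \<omega> * exp (- \<theta> * X k \<omega> / 2)) * G (\<lambda>n. X n \<omega>) \<partial>M)"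
proof -
  define i where "i = (Inr k :: nat + nat)"
  define c where "c v = sfv_flow \<theta> p (sfv_post \<theta> p x (X_coord i) (U_coord i) k v) (X_coord i k v)" for v
  define F where "F z = ennreal (if (fst z < c (snd z)) = b then 1 else 0) * G (\<lambda>n. X_coord i n (snd z))"
    for z
  have [measurable]: "c \<in> borel_measurable (PS i)"
    unfolding c_def[abs_def] sfv_flow_def by measurable
  have [measurable]: "F \<in> borel_measurable (borel \<Otimes>\<^sub>M PS i)"
    unfolding F_def[abs_def] by measurable
  have c_others: "c (others i \<omega>) = sfv_flow \<theta> p (post k \<omega>) (X k \<omega>)" for \<omega>
  proof -
    have "sfv_post \<theta> p x (X_coord i) (U_coord i) k (others i \<omega>) = post k \<omega>"
      unfolding post_def by (rule sfv_post_cong) (auto simp: X_coord_others U_coord_others i_def)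
    then show ?thesis by (simp add: c_def X_coord_others i_def)
  qed
  have X_others: "(\<lambda>n. X_coord i n (others i \<omega>)) = (\<lambda>n. X n \<omega>)" for \<omega>
    by (simp add: X_coord_others i_def)
  have Y_i: "Y i \<omega> = U k \<omega>" for \<omega>
    by (simp add: Y_def i_def)
  have "(\<integral>\<^sup>+\<omega>. ennreal (is_type b (Suc k) \<omega>) * G (\<lambda>n. X n \<omega>) \<partial>M) = (\<integral>\<^sup>+\<omega>. F (Y i \<omega>, others i \<omega>) \<partial>M)"
    by (intro nn_integral_cong) (simp add: F_def is_type_Suc c_others X_others Y_i)
  also have "\<dots> = (\<integral>\<^sup>+v. (\<integral>\<^sup>+\<omega>. F (Y i \<omega>, v) \<partial>M) \<partial>distr M (PS i) (others i))"
    by (rule nn_integral_split_coordinate) simp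
  also have "\<dots> = (\<integral>\<^sup>+v. ennreal (if b then c v else 1 - c v) * G (\<lambda>n. X_coord i n v)
      \<partial>distr M (PS i) (others i))"
  proof (rule nn_integral_cong_AE)
    have "AE \<omega> in M. 0 \<le> c (others i \<omega>) \<and> c (others i \<omega>) \<le> 1"
      using AE_X_pos
    proof eventually_elim
      case (elim \<omega>)
      then show ?case
        using sfv_flow_bounds[of \<theta> p "post k \<omega>" "X k \<omega>"] post_bounds[of k \<omega>] \<theta>_pos p_pos p_less_1
        by (simp add: c_others less_imp_le)
    qed
    then have "AE v in distr M (PS i) (others i). 0 \<le> c v \<and> c v \<le> 1"
      by (subst AE_distr_iff) auto
    then show "AE v in distr M (PS i) (others i).
        (\<integral>\<^sup>+\<omega>. F (Y i \<omega>, v) \<partial>M) = ennreal (if b then c v else 1 - c v) * G (\<lambda>n. X_coord i n v)"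
    proof eventually_elim
      case (elim v)
      then show ?case
        using nn_integral_U_choice[of "c v" k b "G (\<lambda>n. X_coord i n v)"] by (simp add: F_def Y_i)
    qed
  qed
  also have "\<dots> = (\<integral>\<^sup>+\<omega>. ennreal (if b then c (others i \<omega>) else 1 - c (others i \<omega>))
      * G (\<lambda>n. X_coord i n (others i \<omega>)) \<partial>M)"
    by (subst nn_integral_distr) auto
  also have "\<dots> = (\<integral>\<^sup>+\<omega>. ennreal (type_prob b 0 * (1 - exp (- \<theta> * X k \<omega> / 2))
       + is_type b k \<omega> * exp (- \<theta> * X k \<omega> / 2)) * G (\<lambda>n. X n \<omega>) \<partial>M)"
    by (intro nn_integral_cong)
      (auto simp: c_others X_others sfv_flow_def type_prob_def is_type_def algebra_simps)
  finally show ?thesis .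
qed

lemma nn_integral_is_type:
  assumes "G \<in> borel_measurable (PiM UNIV (\<lambda>_. borel::real measure))"
  shows "(\<integral>\<^sup>+\<omega>. ennreal (is_type b k \<omega>) * G (\<lambda>n. X n \<omega>) \<partial>M)
    = (\<integral>\<^sup>+\<omega>. ennreal (type_prob b (exp (- \<theta> * S k \<omega> / 2))) * G (\<lambda>n. X n \<omega>) \<partial>M)"
  using assms
proof (induction k arbitrary: G)
  case 0
  then show ?case by (simp add: is_type_def type_prob_def post_def S_0)
next
  case (Suc k)
  note [measurable] = Suc.prems
  define e where "e \<omega> = exp (- \<theta> * X k \<omega> / 2)" for \<omega>
  define a where "a \<omega> = type_prob b 0 * (1 - e \<omega>)" for \<omega>
  have [measurable]: "e \<in> borel_measurable M" "a \<in> borel_measurable M"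
    unfolding e_def[abs_def] a_def[abs_def] type_prob_def by measurable
  have e_a_bounds: "AE \<omega> in M. 0 \<le> e \<omega> \<and> 0 \<le> a \<omega>"
    using AE_X_pos
  proof eventually_elim
    case (elim \<omega>)
    then have "e \<omega> \<le> 1" using \<theta>_pos by (simp add: e_def less_imp_le)
    then show ?case
      using type_prob_nonneg[of 0 b] by (simp add: a_def e_def)
  qed
  have "(\<integral>\<^sup>+\<omega>. ennreal (is_type b (Suc k) \<omega>) * G (\<lambda>n. X n \<omega>) \<partial>M)
      = (\<integral>\<^sup>+\<omega>. ennreal (a \<omega> + is_type b k \<omega> * e \<omega>) * G (\<lambda>n. X n \<omega>) \<partial>M)"
    unfolding nn_integral_is_type_Suc[OF Suc.prems] a_def e_def ..
  also have "\<dots> = (\<integral>\<^sup>+\<omega>. ennreal (a \<omega>) * G (\<lambda>n. X n \<omega>)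
      + ennreal (is_type b k \<omega>) * (ennreal (e \<omega>) * G (\<lambda>n. X n \<omega>)) \<partial>M)"
    using e_a_bounds
  proof (intro nn_integral_cong_AE, eventually_elim)
    case (elim \<omega>)
    then show ?case by (intro ennreal_add_mult_distrib) (auto simp: is_type_nonneg)
  qed
  also have "\<dots> = (\<integral>\<^sup>+\<omega>. ennreal (a \<omega>) * G (\<lambda>n. X n \<omega>) \<partial>M)
      + (\<integral>\<^sup>+\<omega>. ennreal (is_type b k \<omega>) * (ennreal (e \<omega>) * G (\<lambda>n. X n \<omega>)) \<partial>M)"
    unfolding is_type_def by (rule nn_integral_add) auto
  also have "(\<integral>\<^sup>+\<omega>. ennreal (is_type b k \<omega>) * (ennreal (e \<omega>) * G (\<lambda>n. X n \<omega>)) \<partial>M)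
      = (\<integral>\<^sup>+\<omega>. ennreal (type_prob b (exp (- \<theta> * S k \<omega> / 2))) * (ennreal (e \<omega>) * G (\<lambda>n. X n \<omega>)) \<partial>M)"
    using Suc.IH[of "\<lambda>xs. ennreal (exp (- \<theta> * xs k / 2)) * G xs"] by (simp add: e_def)
  also have "(\<integral>\<^sup>+\<omega>. ennreal (a \<omega>) * G (\<lambda>n. X n \<omega>) \<partial>M) + \<dots>
      = (\<integral>\<^sup>+\<omega>. ennreal (a \<omega>) * G (\<lambda>n. X n \<omega>)
        + ennreal (type_prob b (exp (- \<theta> * S k \<omega> / 2))) * (ennreal (e \<omega>) * G (\<lambda>n. X n \<omega>)) \<partial>M)"
    unfolding type_prob_def by (rule nn_integral_add[symmetric]) auto
  also have "\<dots> = (\<integral>\<^sup>+\<omega>. ennreal (type_prob b (exp (- \<theta> * S (Suc k) \<omega> / 2))) * G (\<lambda>n. X n \<omega>) \<partial>M)"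
    using e_a_bounds AE_S_nonneg
  proof (intro nn_integral_cong_AE, eventually_elim)
    case (elim \<omega>)
    \<comment> \<open>the flow property: running for \<open>S k\<close> and then for \<open>X k\<close> is running for \<open>S (Suc k)\<close>\<close>
    have "exp (- \<theta> * S (Suc k) \<omega> / 2) = exp (- \<theta> * S k \<omega> / 2) * e \<omega>"
      by (simp add: S_Suc e_def exp_add[symmetric] field_simps)
    then have step: "type_prob b (exp (- \<theta> * S (Suc k) \<omega> / 2))
        = a \<omega> + type_prob b (exp (- \<theta> * S k \<omega> / 2)) * e \<omega>"
      by (simp add: a_def type_prob_def algebra_simps)
    have "0 \<le> type_prob b (exp (- \<theta> * S k \<omega> / 2))"
      using elim \<theta>_pos by (intro type_prob_nonneg) auto
    then show ?case
      unfolding step using elim by (intro ennreal_add_mult_distrib[symmetric]) auto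
  qed
  finally show ?case .
qed

lemma S_Suc_erlang: "distributed M lborel (S (Suc k)) (erlang_density k 1)"
proof (induction k)
  case 0
  have "S (Suc 0) = X 0" by (simp add: S_eq_sum fun_eq_iff)
  then show ?case using X_distr[of 0] by simp
next
  case (Suc k)
  have "sfv_jump (X_coord (Inl (Suc k))) (Suc k) (others (Inl (Suc k)) \<omega>) = S (Suc k) \<omega>" for \<omega>
    unfolding S_def by (rule sfv_jump_cong) (auto simp: X_coord_others)
  moreover have "indep_var borel (\<lambda>\<omega>. sfv_jump (X_coord (Inl (Suc k))) (Suc k) (others (Inl (Suc k)) \<omega>))
      borel (Y (Inl (Suc k)))"
    by (intro indep_var_others sfv_jump_measurable X_coord_measurable)
  ultimately have "indep_var borel (S (Suc k)) borel (X (Suc k))"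
    by (simp add: Y_def)
  then have "distributed M lborel (\<lambda>\<omega>. S (Suc k) \<omega> + X (Suc k) \<omega>) (erlang_density (Suc k + Suc 0 - 1) 1)"
    by (rule sum_indep_erlang[OF _ _ Suc.IH X_distr]) simp
  moreover have "(\<lambda>\<omega>. S (Suc k) \<omega> + X (Suc k) \<omega>) = S (Suc (Suc k))"
    by (simp add: S_Suc fun_eq_iff)
  ultimately show ?case by simp
qed

lemma nn_integral_S_window:
  assumes [measurable]: "h \<in> borel_measurable borel"
  shows "(\<integral>\<^sup>+\<omega>. h (S (Suc k) \<omega>)
        * indicator {\<omega>. S (Suc k) \<omega> \<le> t \<and> t < S (Suc k) \<omega> + X (Suc k) \<omega>} \<omega> \<partial>M)
    = (\<integral>\<^sup>+s. ennreal (erlang_density k 1 s) * (h s * indicator {..t} s * ennreal (exp (- (t - s)))) \<partial>lborel)"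
proof -
  define i where "i = (Inl (Suc k) :: nat + nat)"
  define T where "T v = sfv_jump (X_coord i) (Suc k) v" for v
  define F where "F z = h (T (snd z)) * indicator {z. T (snd z) \<le> t \<and> t < T (snd z) + fst z} z"
    for z :: "real \<times> (nat + nat \<Rightarrow> real)"
  have [measurable]: "T \<in> borel_measurable (PS i)"
    unfolding T_def[abs_def] by measurable
  have [measurable]: "F \<in> borel_measurable (borel \<Otimes>\<^sub>M PS i)"
    unfolding F_def[abs_def] by measurable
  have T_others: "T (others i \<omega>) = S (Suc k) \<omega>" for \<omega>
    unfolding T_def S_def i_def by (rule sfv_jump_cong) (auto simp: X_coord_others)
  have Y_i: "Y i \<omega> = X (Suc k) \<omega>" for \<omega>
    by (simp add: Y_def i_def)
  have "(\<integral>\<^sup>+\<omega>. h (S (Suc k) \<omega>)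
        * indicator {\<omega>. S (Suc k) \<omega> \<le> t \<and> t < S (Suc k) \<omega> + X (Suc k) \<omega>} \<omega> \<partial>M)
      = (\<integral>\<^sup>+\<omega>. F (Y i \<omega>, others i \<omega>) \<partial>M)"
    by (intro nn_integral_cong) (simp add: F_def T_others Y_i split: split_indicator)
  also have "\<dots> = (\<integral>\<^sup>+v. (\<integral>\<^sup>+\<omega>. F (Y i \<omega>, v) \<partial>M) \<partial>distr M (PS i) (others i))"
    by (rule nn_integral_split_coordinate) simp
  also have "\<dots> = (\<integral>\<^sup>+v. h (T v) * indicator {..t} (T v) * ennreal (exp (- (t - T v)))
      \<partial>distr M (PS i) (others i))"
  proof (rule nn_integral_cong)
    fix v :: "nat + nat \<Rightarrow> real"
    have "(\<integral>\<^sup>+\<omega>. F (Y i \<omega>, v) \<partial>M)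
        = (\<integral>\<^sup>+\<omega>. (h (T v) * indicator {..t} (T v)) * indicator {\<omega>\<in>space M. t - T v < X (Suc k) \<omega>} \<omega> \<partial>M)"
      by (intro nn_integral_cong) (auto simp: F_def Y_i split: split_indicator)
    also have "\<dots> = h (T v) * indicator {..t} (T v) * emeasure M {\<omega>\<in>space M. t - T v < X (Suc k) \<omega>}"
      by (rule nn_integral_cmult_indicator) measurable
    also have "\<dots> = h (T v) * indicator {..t} (T v) * ennreal (exp (- (t - T v)))"
      by (cases "T v \<le> t") (simp_all add: emeasure_X_greater)
    finally show "(\<integral>\<^sup>+\<omega>. F (Y i \<omega>, v) \<partial>M) = h (T v) * indicator {..t} (T v) * ennreal (exp (- (t - T v)))" .
  qed
  also have "\<dots> = (\<integral>\<^sup>+\<omega>. h (S (Suc k) \<omega>) * indicator {..t} (S (Suc k) \<omega>)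
      * ennreal (exp (- (t - S (Suc k) \<omega>))) \<partial>M)"
    by (subst nn_integral_distr) (auto simp: T_others)
  also have "\<dots> = (\<integral>\<^sup>+s. ennreal (erlang_density k 1 s) * (h s * indicator {..t} s * ennreal (exp (- (t - s)))) \<partial>lborel)"
    by (rule distributed_nn_integral[OF S_Suc_erlang, symmetric]) measurable
  finally show ?thesis .
qed

lemma emeasure_S_bounded: "emeasure M {\<omega>\<in>space M. \<forall>n. S n \<omega> \<le> t} = 0"
proof -
  let ?Z = "{\<omega>\<in>space M. \<forall>n. S n \<omega> \<le> t}"
  define q where "q n = measure M {\<omega>\<in>space M. S (Suc n) \<omega> \<le> t}" for n
  have le: "measure M ?Z \<le> q n" for n
    unfolding q_def by (rule finite_measure_mono) auto
  have q: "q n = 1 - exp (- t) * (\<Sum>j\<le>n. t ^ j / fact j)" for n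
    using erlang_distributed_le[OF S_Suc_erlang[of n], of t] t_pos
    by (simp add: q_def erlang_CDF_def sum_distrib_left field_simps)
  have "(\<lambda>n. \<Sum>j<Suc n. t ^ j / fact j) \<longlonglongrightarrow> exp t"
    using exp_converges[of t] by (intro LIMSEQ_Suc) (simp add: sums_def divide_inverse mult.commute)
  then have "(\<lambda>n. 1 - exp (- t) * (\<Sum>j\<le>n. t ^ j / fact j)) \<longlonglongrightarrow> 1 - exp (- t) * exp t"
    by (intro tendsto_intros) (simp add: lessThan_Suc_atMost)
  then have "q \<longlonglongrightarrow> 0" by (simp add: q[abs_def] exp_minus)
  then have "measure M ?Z \<le> 0" by (rule LIMSEQ_le_const) (use le in auto)
  then show ?thesis by (simp add: emeasure_eq_measure antisym)
qed

lemma AE_S_unbounded: "AE \<omega> in M. \<not> (\<forall>n. S n \<omega> \<le> t)"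
  by (subst AE_iff_measurable[OF _ refl]) (auto simp: emeasure_S_bounded)

lemma count_eq: "N \<omega> = card {n. 1 \<le> n \<and> S n \<omega> \<le> t}"
  by (simp add: sfv_count_def S_def)

lemma count_eq_Suc_iff:
  "N \<omega> = Suc a \<longleftrightarrow> (\<exists>F\<in>{F. finite F \<and> card F = Suc a}. \<forall>n. (1 \<le> n \<and> S n \<omega> \<le> t) = (n \<in> F))"
proof
  assume "N \<omega> = Suc a"
  then have "card {n. 1 \<le> n \<and> S n \<omega> \<le> t} = Suc a" by (simp add: count_eq)
  moreover then have "finite {n. 1 \<le> n \<and> S n \<omega> \<le> t}" by (intro card_ge_0_finite) simp
  ultimately show "\<exists>F\<in>{F. finite F \<and> card F = Suc a}. \<forall>n. (1 \<le> n \<and> S n \<omega> \<le> t) = (n \<in> F)"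
    by (intro bexI[of _ "{n. 1 \<le> n \<and> S n \<omega> \<le> t}"]) auto
next
  assume "\<exists>F\<in>{F. finite F \<and> card F = Suc a}. \<forall>n. (1 \<le> n \<and> S n \<omega> \<le> t) = (n \<in> F)"
  then obtain F where F: "finite F" "card F = Suc a" "\<And>n. (1 \<le> n \<and> S n \<omega> \<le> t) = (n \<in> F)" by auto
  then have "{n. 1 \<le> n \<and> S n \<omega> \<le> t} = F" by auto
  then show "N \<omega> = Suc a" using F by (simp add: count_eq)
qed

lemma count_eq_Suc_sets: "{\<omega>\<in>space M. N \<omega> = Suc a} \<in> sets M"
proof -
  have "{\<omega>\<in>space M. N \<omega> = Suc a} = (\<Union>F\<in>{F. finite F \<and> card F = Suc a}.
      {\<omega>\<in>space M. \<forall>n. (1 \<le> n \<and> S n \<omega> \<le> t) = (n \<in> F)})"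
    by (auto simp: count_eq_Suc_iff)
  also have "\<dots> \<in> sets M"
  proof (rule sets.countable_UN')
    show "countable {F::nat set. finite F \<and> card F = Suc a}"
      by (rule countable_subset[OF _ countable_Collect_finite]) auto
  qed auto
  finally show ?thesis .
qed

lemma count_measurable[measurable]: "N \<in> measurable M (count_space UNIV)"
proof (subst measurable_count_space_eq2_countable, safe)
  fix a :: nat
  show "N -` {a} \<inter> space M \<in> sets M"
  proof (cases a)
    case (Suc b)
    then show ?thesis using count_eq_Suc_sets[of b] by (simp add: vimage_def Int_def conj_commute)
  next
    case 0
    have "N -` {a} \<inter> space M = space M - (\<Union>b. {\<omega>\<in>space M. N \<omega> = Suc b})"
      using 0 by auto (metis not0_implies_Suc)
    also have "\<dots> \<in> sets M" using count_eq_Suc_sets by auto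
    finally show ?thesis .
  qed
qed simp

lemma proc_eq: "proc \<omega> = sfv_flow \<theta> p (post (N \<omega>) \<omega>) (t - S (N \<omega>) \<omega>)"
  by (simp add: sfv_proc_def post_def S_def Let_def)

lemma proc_measurable[measurable]: "proc \<in> borel_measurable M"
proof -
  have "(\<lambda>\<omega>. (\<lambda>k \<omega>. sfv_flow \<theta> p (post k \<omega>) (t - S k \<omega>)) (N \<omega>) \<omega>) \<in> borel_measurable M"
    by (rule measurable_compose_countable[OF _ count_measurable]) (unfold sfv_flow_def, measurable)
  then show ?thesis by (simp only: proc_eq[abs_def])
qed

lemma S_mono:
  assumes "\<forall>n. 0 < X n \<omega>" "a \<le> b"
  shows "S a \<omega> \<le> S b \<omega>"
  by (rule lift_Suc_mono_le[of "\<lambda>k. S k \<omega>", OF _ assms(2)]) (use assms(1) in \<open>simp add: S_Suc less_imp_le\<close>)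

lemma count_eq_if_between:
  assumes pos: "\<forall>n. 0 < X n \<omega>" and k: "S k \<omega> \<le> t" "t < S (Suc k) \<omega>"
  shows "N \<omega> = k"
proof -
  have "{n. 1 \<le> n \<and> S n \<omega> \<le> t} = {1..k}"
  proof (intro set_eqI iffI)
    fix n assume n: "n \<in> {n. 1 \<le> n \<and> S n \<omega> \<le> t}"
    have "n \<le> k"
    proof (rule ccontr)
      assume "\<not> n \<le> k"
      then have "S (Suc k) \<omega> \<le> S n \<omega>" by (intro S_mono[OF pos]) simp
      then show False using k n by simp
    qed
    then show "n \<in> {1..k}" using n by simp
  next
    fix n assume "n \<in> {1..k}"
    then show "n \<in> {n. 1 \<le> n \<and> S n \<omega> \<le> t}" using S_mono[OF pos, of n k] k by auto
  qed
  then show ?thesis by (simp add: count_eq)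
qed

lemma S_bracket:
  assumes "\<not> (\<forall>n. S n \<omega> \<le> t)"
  obtains k where "S k \<omega> \<le> t" "t < S (Suc k) \<omega>"
proof -
  define n where "n = (LEAST n. t < S n \<omega>)"
  have "\<exists>n. t < S n \<omega>" using assms by (auto simp: not_le)
  then have tn: "t < S n \<omega>" unfolding n_def by (rule LeastI_ex)
  then obtain k where nk: "n = Suc k" using t_pos by (cases n) (auto simp: S_0)
  have "\<not> t < S k \<omega>" using not_less_Least[of k "\<lambda>n. t < S n \<omega>"] nk n_def by simp
  then show ?thesis using that[of k] tn nk by simp
qed

lemma count_eq_Suc_iff_window:
  assumes pos: "\<forall>n. 0 < X n \<omega>"
  shows "N \<omega> = Suc m \<longleftrightarrow> S (Suc m) \<omega> \<le> t \<and> t < S (Suc m) \<omega> + X (Suc m) \<omega>"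
proof (cases "\<forall>n. S n \<omega> \<le> t")
  case True
  then have "N \<omega> = 0"
    using infinite_Ici[of "1::nat"] by (simp add: count_eq atLeast_def)
  moreover have "S (Suc (Suc m)) \<omega> \<le> t" using True by simp
  ultimately show ?thesis by (auto simp: S_Suc)
next
  case False
  then obtain k where k: "S k \<omega> \<le> t" "t < S (Suc k) \<omega>" by (rule S_bracket)
  have "N \<omega> = k" by (rule count_eq_if_between[OF pos k])
  then show ?thesis
    using k count_eq_if_between[OF pos, of "Suc m"] by (auto simp: S_Suc)
qed

lemma count_eq_0_iff:
  assumes pos: "\<forall>n. 0 < X n \<omega>" and unbounded: "\<not> (\<forall>n. S n \<omega> \<le> t)"
  shows "N \<omega> = 0 \<longleftrightarrow> t < X 0 \<omega>"
proof -
  obtain k where k: "S k \<omega> \<le> t" "t < S (Suc k) \<omega>" using unbounded by (rule S_bracket)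
  have "N \<omega> = k" by (rule count_eq_if_between[OF pos k])
  then show ?thesis
    using k count_eq_if_between[OF pos, of 0] t_pos by (auto simp: S_Suc S_0)
qed

text \<open>For \<open>b = True\<close> (last replacement to type 1) resp. \<open>False\<close>, \<open>region b\<close> and \<open>dens b m\<close> are the
  first resp. second case of \<open>f\<^sub>m\<^sub>+\<^sub>1\<close>, written uniformly with \<open>cc b = of_bool b - p\<close>, so that
  \<open>\<xi> = p + cc b * w\<close> and \<open>r\<^sub>1\<close>, \<open>r\<^sub>2\<close> become \<open>type_prob b (e_t / w)\<close>.\<close>
definition "e_t = exp (- \<theta> * t / 2)"
definition "cc b = of_bool b - p"
definition "region b = (if b then {p + (1 - p) * e_t <..< 1} else {0 <..< p * (1 - e_t)})"
definition "dens b m \<xi> = 2 * real (Suc m) * type_prob b (e_t / ((\<xi> - p) / cc b)) / (\<theta> * t * \<bar>\<xi> - p\<bar>)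
   * (1 + 2 / (\<theta> * t) * ln ((\<xi> - p) / cc b)) ^ m * t ^ Suc m / fact (Suc m) * exp (- t)"

lemma e_t_bounds: "0 < e_t" "e_t < 1"
  using \<theta>_pos t_pos by (auto simp: e_t_def)

lemma cc_nonzero: "cc b \<noteq> 0"
  using p_pos p_less_1 by (auto simp: cc_def)

lemma region_iff: "p + cc b * w \<in> region b \<longleftrightarrow> e_t < w \<and> w < 1"
proof (cases b)
  case True
  have "p + (1 - p) * w < 1 \<longleftrightarrow> (1 - p) * w < (1 - p) * 1" by (simp add: algebra_simps)
  also have "\<dots> \<longleftrightarrow> w < 1" by (intro mult_less_cancel_left_pos) (use p_less_1 in simp)
  finally show ?thesis
    using True p_less_1 by (auto simp: region_def cc_def mult_less_cancel_left_pos)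
next
  case False
  have "p + (0 - p) * w = p * (1 - w)" by (simp add: algebra_simps)
  moreover have "p * (1 - w) < p * (1 - e_t) \<longleftrightarrow> e_t < w"
    using p_pos by (auto simp: mult_less_cancel_left_pos)
  moreover have "0 < p * (1 - w) \<longleftrightarrow> w < 1" using p_pos by (simp add: zero_less_mult_iff)
  ultimately show ?thesis using False by (auto simp: region_def cc_def)
qed

lemma region_True_gt: "\<xi> \<in> region True \<Longrightarrow> p < \<xi>"
  using e_t_bounds p_less_1 by (simp add: region_def) (smt (verit) mult_pos_pos)

lemma region_False_less: "\<xi> \<in> region False \<Longrightarrow> \<xi> < p"
proof -
  assume "\<xi> \<in> region False"
  moreover have "p * (1 - e_t) < p" using e_t_bounds p_pos by simp
  ultimately show "\<xi> < p" by (simp add: region_def)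
qed

lemma region_disjoint: "\<xi> \<in> region True \<Longrightarrow> \<xi> \<notin> region False"
  using region_True_gt region_False_less by fastforce

lemma region_sets[measurable]: "region b \<in> sets borel"
  by (simp add: region_def)

lemma dens_measurable[measurable]: "dens b m \<in> borel_measurable borel"
  unfolding dens_def[abs_def] type_prob_def by measurable

lemma dens_nonneg:
  assumes "\<xi> \<in> region b"
  shows "0 \<le> dens b m \<xi>"
proof -
  define w where "w = (\<xi> - p) / cc b"
  have "\<xi> = p + cc b * w" using cc_nonzero by (simp add: w_def)
  then have w: "e_t < w" "w < 1" using assms region_iff[of b w] by auto
  have "ln e_t < ln w" using w e_t_bounds by simp
  then have "0 < 1 + 2 / (\<theta> * t) * ln w"
    using \<theta>_pos t_pos by (simp add: e_t_def field_simps)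
  moreover have "0 \<le> type_prob b (e_t / w)"
    using w e_t_bounds by (intro type_prob_nonneg) (auto simp: field_simps)
  ultimately show ?thesis
    unfolding dens_def w_def[symmetric] using \<theta>_pos t_pos
    by (intro mult_nonneg_nonneg divide_nonneg_nonneg) auto
qed

text \<open>Along the flow the logarithmic factor of \<open>dens\<close> becomes \<open>s / t\<close> and \<open>e_t / w\<close> becomes
  \<open>exp (- \<theta> * s / 2)\<close>, which together with the Jacobian leaves the Erlang weight.\<close>
lemma dens_flow_jacobian:
  "\<bar>cc b\<bar> * dens b m (sfv_flow \<theta> p (of_bool b) (t - s)) * (\<theta> / 2 * exp (- \<theta> * (t - s) / 2))
    = type_prob b (exp (- \<theta> * s / 2)) * s ^ m / fact m * exp (- t)"
proof -
  define c where "c = cc b"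
  define g where "g = exp (- \<theta> * (t - s) / 2)"
  have c: "c \<noteq> 0" using cc_nonzero by (simp add: c_def)
  have g: "0 < g" by (simp add: g_def)
  have flow: "sfv_flow \<theta> p (of_bool b) (t - s) = p + c * g"
    by (simp add: sfv_flow_def c_def cc_def g_def)
  have w: "(p + c * g - p) / c = g" using c by simp
  have base: "1 + 2 / (\<theta> * t) * ln ((p + c * g - p) / c) = s / t"
    unfolding w using \<theta>_pos t_pos by (simp add: g_def field_simps)
  have ratio: "e_t / ((p + c * g - p) / c) = exp (- \<theta> * s / 2)"
    unfolding w by (simp add: e_t_def g_def exp_diff[symmetric] field_simps)
  have abs: "\<bar>p + c * g - p\<bar> = \<bar>c\<bar> * g" using g by (simp add: abs_mult)
  have st: "(s / t) ^ m * t ^ Suc m = s ^ m * t" using t_pos by (simp add: power_divide)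
  have fs: "fact (Suc m) = real (Suc m) * (fact m :: real)" by simp
  have "\<bar>c\<bar> * dens b m (p + c * g) * (\<theta> / 2 * g)
      = \<bar>c\<bar> * (2 * real (Suc m) * type_prob b (exp (- \<theta> * s / 2)) / (\<theta> * t * (\<bar>c\<bar> * g))
        * ((s / t) ^ m * t ^ Suc m) / fact (Suc m) * exp (- t)) * (\<theta> / 2 * g)"
    unfolding dens_def c_def[symmetric] base ratio abs by (simp add: mult.assoc)
  also have "\<dots> = type_prob b (exp (- \<theta> * s / 2)) * s ^ m / fact m * exp (- t)"
    unfolding st fs using c g \<theta>_pos t_pos by (simp add: field_simps del: of_nat_Suc)
  finally show ?thesis by (simp add: flow c_def g_def)
qed

lemma nn_integral_dens_region:
  assumes [measurable]: "A \<in> sets borel"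
  shows "(\<integral>\<^sup>+\<xi>. ennreal (indicator (region b) \<xi> * dens b m \<xi>) * indicator A \<xi> \<partial>lborel)
    = (\<integral>\<^sup>+s. ennreal (type_prob b (exp (- \<theta> * s / 2)) * s ^ m / fact m * exp (- t)
        * indicator A (sfv_flow \<theta> p (of_bool b) (t - s))) * indicator {0..t} s \<partial>lborel)"
proof -
  define c where "c = cc b"
  have c: "c \<noteq> 0" using cc_nonzero by (simp add: c_def)
  define g where "g s = exp (- \<theta> * (t - s) / 2)" for s
  define g' where "g' s = \<theta> / 2 * exp (- \<theta> * (t - s) / 2)" for s
  define \<phi> where "\<phi> w = \<bar>c\<bar> * dens b m (p + c * w) * indicator A (p + c * w)" for w
  have [measurable]: "\<phi> \<in> borel_measurable borel" unfolding \<phi>_def[abs_def] by measurable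
  have "(\<integral>\<^sup>+\<xi>. ennreal (indicator (region b) \<xi> * dens b m \<xi>) * indicator A \<xi> \<partial>lborel)
     = \<bar>c\<bar> * (\<integral>\<^sup>+w. ennreal (indicator (region b) (p + c * w) * dens b m (p + c * w))
        * indicator A (p + c * w) \<partial>lborel)"
    by (rule nn_integral_real_affine[OF _ c]) measurable
  also have "\<dots> = (\<integral>\<^sup>+w. ennreal \<bar>c\<bar> * (ennreal (indicator (region b) (p + c * w) * dens b m (p + c * w))
      * indicator A (p + c * w)) \<partial>lborel)"
    by (subst nn_integral_cmult) auto
  also have "\<dots> = (\<integral>\<^sup>+w. ennreal (\<phi> w * indicator {g 0 .. g t} w) \<partial>lborel)"
  proof (rule nn_integral_cong_AE)
    have ends: "g 0 = e_t" "g t = 1" by (simp_all add: g_def e_t_def)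
    \<comment> \<open>in \<open>w\<close>, \<open>region b\<close> is the open interval \<open>(e_t, 1)\<close>; its endpoints are null sets\<close>
    show "AE w in lborel. ennreal \<bar>c\<bar> * (ennreal (indicator (region b) (p + c * w) * dens b m (p + c * w))
        * indicator A (p + c * w)) = ennreal (\<phi> w * indicator {g 0 .. g t} w)"
      using AE_lborel_singleton[of e_t] AE_lborel_singleton[of 1] by eventually_elim
        (auto simp: ends region_iff[of b, folded c_def] \<phi>_def indicator_def ennreal_mult' ennreal_mult'' mult.assoc)
  qed
  also have "\<dots> = (\<integral>\<^sup>+s. ennreal (\<phi> (g s) * g' s * indicator {0..t} s) \<partial>lborel)"
  proof (rule nn_integral_substitution)
    show "set_borel_measurable borel {g 0..g t} \<phi>"
      unfolding set_borel_measurable_def by measurable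
    show "(g has_real_derivative g' s) (at s)" for s
      unfolding g_def g'_def by (auto intro!: derivative_eq_intros simp: field_simps)
    show "continuous_on {0..t} g'" unfolding g'_def by (intro continuous_intros) auto
    show "0 \<le> g' s" for s using \<theta>_pos by (simp add: g'_def)
  qed (use t_pos in simp)
  also have "\<dots> = (\<integral>\<^sup>+s. ennreal (type_prob b (exp (- \<theta> * s / 2)) * s ^ m / fact m * exp (- t)
      * indicator A (sfv_flow \<theta> p (of_bool b) (t - s))) * indicator {0..t} s \<partial>lborel)"
  proof (rule nn_integral_cong)
    fix s :: real
    have flow: "sfv_flow \<theta> p (of_bool b) (t - s) = p + c * g s"
      by (simp add: sfv_flow_def c_def cc_def g_def)
    have jacobian: "\<bar>c\<bar> * dens b m (p + c * g s) * g' s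
        = type_prob b (exp (- \<theta> * s / 2)) * s ^ m / fact m * exp (- t)"
      using dens_flow_jacobian[of b m s] unfolding flow by (simp add: c_def g_def g'_def)
    have "\<phi> (g s) * g' s = \<bar>c\<bar> * dens b m (p + c * g s) * g' s * indicator A (sfv_flow \<theta> p (of_bool b) (t - s))"
      by (simp add: \<phi>_def flow mult_ac)
    then have "\<phi> (g s) * g' s = type_prob b (exp (- \<theta> * s / 2)) * s ^ m / fact m * exp (- t)
        * indicator A (sfv_flow \<theta> p (of_bool b) (t - s))"
      unfolding jacobian .
    then show "ennreal (\<phi> (g s) * g' s * indicator {0..t} s) = ennreal (type_prob b (exp (- \<theta> * s / 2))
        * s ^ m / fact m * exp (- t) * indicator A (sfv_flow \<theta> p (of_bool b) (t - s))) * indicator {0..t} s"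
      by (simp add: indicator_def)
  qed
  finally show ?thesis .
qed

lemma sfv_fk_Suc_eq:
  "sfv_fk \<theta> p x t (Suc m) \<xi>
    = (if \<xi> \<in> region True then dens True m \<xi> else if \<xi> \<in> region False then dens False m \<xi> else 0)"
proof -
  have e: "exp (- \<theta> * t / 2) = e_t" by (simp add: e_t_def)
  consider "\<xi> \<in> region True" | "\<xi> \<in> region False" | "\<xi> \<notin> region True" "\<xi> \<notin> region False"
    by blast
  then show ?thesis
  proof cases
    case 1
    then have c: "p + (1 - p) * e_t < \<xi> \<and> \<xi> < 1" by (simp add: region_def)
    have "p < \<xi>" using 1 by (rule region_True_gt)
    then have r: "p + (x - p) * e_t * (1 - p) / (\<xi> - p) = type_prob True (e_t / ((\<xi> - p) / cc True))"
      using p_less_1 by (simp add: type_prob_def cc_def field_simps)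
    show ?thesis
      using 1 c \<open>p < \<xi>\<close> unfolding sfv_fk_def Let_def e dens_def by (simp add: r cc_def)
  next
    case 2
    then have c: "0 < \<xi> \<and> \<xi> < p * (1 - e_t)" by (simp add: region_def)
    have "\<xi> < p" using 2 by (rule region_False_less)
    then have r: "1 - p - (x - p) * e_t * p / (p - \<xi>) = type_prob False (e_t / ((\<xi> - p) / cc False))"
      and l: "(p - \<xi>) / p = (\<xi> - p) / cc False"
      using p_pos by (simp_all add: type_prob_def cc_def field_simps)
    have n1: "\<not> (p + (1 - p) * e_t < \<xi> \<and> \<xi> < 1)"
      using region_True_gt[of \<xi>] \<open>\<xi> < p\<close> by (auto simp: region_def)
    have "\<xi> \<notin> region True"
      using region_True_gt[of \<xi>] \<open>\<xi> < p\<close> by auto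
    with 2 \<open>\<xi> < p\<close> show ?thesis
      unfolding sfv_fk_def Let_def e if_not_P[OF n1] if_P[OF c] by (simp add: dens_def r l)
  next
    case 3
    then have n1: "\<not> (p + (1 - p) * e_t < \<xi> \<and> \<xi> < 1)"
      and n2: "\<not> (0 < \<xi> \<and> \<xi> < p * (1 - e_t))"
      by (simp_all add: region_def)
    with 3 show ?thesis
      unfolding sfv_fk_def Let_def e if_not_P[OF n1] if_not_P[OF n2] by simp
  qed
qed

lemma sfv_fk_measurable[measurable]: "sfv_fk \<theta> p x t k \<in> borel_measurable borel"
  unfolding sfv_fk_def[abs_def] Let_def by measurable

lemma sfv_fk_Suc_nonneg: "0 \<le> sfv_fk \<theta> p x t (Suc m) \<xi>"
  by (auto simp: sfv_fk_Suc_eq intro!: dens_nonneg)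

lemma summable_sfv_fk: "summable (\<lambda>k. sfv_fk \<theta> p x t (Suc k) \<xi>)"
proof -
  have "summable (\<lambda>k. dens b k \<xi>)" for b
    unfolding dens_def Suc_power_fact_rearrange by (intro summable_mult summable_exp)
  then show ?thesis
    by (cases "\<xi> \<in> region True"; cases "\<xi> \<in> region False") (simp_all add: sfv_fk_Suc_eq)
qed

definition window_weight :: "real set \<Rightarrow> nat \<Rightarrow> bool \<Rightarrow> (nat \<Rightarrow> real) \<Rightarrow> ennreal" where
  "window_weight A m b xs =
  indicator {xs. (\<Sum>i<Suc m. xs i) \<le> t \<and> t < (\<Sum>i<Suc m. xs i) + xs (Suc m)} xs
    * indicator A (sfv_flow \<theta> p (of_bool b) (t - (\<Sum>i<Suc m. xs i)))"

lemma window_weight_measurable[measurable]: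
  assumes [measurable]: "A \<in> sets borel"
  shows "window_weight A m b \<in> borel_measurable (PiM UNIV (\<lambda>_. borel))"
  unfolding window_weight_def[abs_def] sfv_flow_def by measurable

lemma nn_integral_is_type_window:
  assumes [measurable]: "A \<in> sets borel"
  shows "(\<integral>\<^sup>+\<omega>. ennreal (is_type b (Suc m) \<omega>) * window_weight A m b (\<lambda>n. X n \<omega>) \<partial>M) =
    (\<integral>\<^sup>+s. ennreal (type_prob b (exp (- \<theta> * s / 2)) * s ^ m / fact m * exp (- t)
      * indicator A (sfv_flow \<theta> p (of_bool b) (t - s))) * indicator {0..t} s \<partial>lborel)"
proof -
  define h where "h s = ennreal (type_prob b (exp (- \<theta> * s / 2))) * indicator A (sfv_flow \<theta> p (of_bool b) (t - s))"
    for s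
  have [measurable]: "h \<in> borel_measurable borel"
    unfolding h_def[abs_def] type_prob_def sfv_flow_def by measurable
  have "(\<integral>\<^sup>+\<omega>. ennreal (is_type b (Suc m) \<omega>) * window_weight A m b (\<lambda>n. X n \<omega>) \<partial>M) =
     (\<integral>\<^sup>+\<omega>. ennreal (type_prob b (exp (- \<theta> * S (Suc m) \<omega> / 2))) * window_weight A m b (\<lambda>n. X n \<omega>) \<partial>M)"
    by (rule nn_integral_is_type) simp
  also have "\<dots> = (\<integral>\<^sup>+\<omega>. h (S (Suc m) \<omega>)
      * indicator {\<omega>. S (Suc m) \<omega> \<le> t \<and> t < S (Suc m) \<omega> + X (Suc m) \<omega>} \<omega> \<partial>M)"
    unfolding window_weight_def h_def S_eq_sum by (intro nn_integral_cong) (simp add: indicator_def)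
  also have "\<dots> = (\<integral>\<^sup>+s. ennreal (erlang_density m 1 s) * (h s * indicator {..t} s * ennreal (exp (- (t - s)))) \<partial>lborel)"
    by (rule nn_integral_S_window) simp
  also have "\<dots> = (\<integral>\<^sup>+s. ennreal (type_prob b (exp (- \<theta> * s / 2)) * s ^ m / fact m * exp (- t)
      * indicator A (sfv_flow \<theta> p (of_bool b) (t - s))) * indicator {0..t} s \<partial>lborel)"
  proof (rule nn_integral_cong)
    fix s :: real
    show "ennreal (erlang_density m 1 s) * (h s * indicator {..t} s * ennreal (exp (- (t - s)))) =
      ennreal (type_prob b (exp (- \<theta> * s / 2)) * s ^ m / fact m * exp (- t)
        * indicator A (sfv_flow \<theta> p (of_bool b) (t - s))) * indicator {0..t} s"
    proof (cases "0 \<le> s \<and> s \<le> t")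
      case False
      then show ?thesis by (auto simp: erlang_density_def indicator_def not_le)
    next
      case True
      have "0 \<le> type_prob b (exp (- \<theta> * s / 2))"
        using True \<theta>_pos by (intro type_prob_nonneg) auto
      then have "ennreal (erlang_density m 1 s) * (h s * indicator {..t} s * ennreal (exp (- (t - s))))
          = ennreal (erlang_density m 1 s * type_prob b (exp (- \<theta> * s / 2)) * exp (- (t - s)))
            * indicator A (sfv_flow \<theta> p (of_bool b) (t - s))"
        using True by (simp add: h_def ennreal_mult mult_ac)
      moreover have "erlang_density m 1 s * type_prob b (exp (- \<theta> * s / 2)) * exp (- (t - s))
          = type_prob b (exp (- \<theta> * s / 2)) * s ^ m / fact m * exp (- t)"
        using True by (simp add: erlang_density_def exp_add[symmetric])
      ultimately show ?thesis
        using True by (simp add: indicator_def)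
    qed
  qed
  finally show ?thesis .
qed

lemma emeasure_count_Suc:
  assumes [measurable]: "A \<in> sets borel"
  shows "emeasure M {\<omega>\<in>space M. N \<omega> = Suc m \<and> proc \<omega> \<in> A}
    = (\<integral>\<^sup>+\<xi>. ennreal (sfv_fk \<theta> p x t (Suc m) \<xi>) * indicator A \<xi> \<partial>lborel)"
proof -
  let ?w = "\<lambda>b \<omega>. ennreal (is_type b (Suc m) \<omega>) * window_weight A m b (\<lambda>n. X n \<omega>)"
  let ?d = "\<lambda>b \<xi>. ennreal (indicator (region b) \<xi> * dens b m \<xi>) * indicator A \<xi>"
  have "emeasure M {\<omega>\<in>space M. N \<omega> = Suc m \<and> proc \<omega> \<in> A}
      = (\<integral>\<^sup>+\<omega>. indicator {\<omega>\<in>space M. N \<omega> = Suc m \<and> proc \<omega> \<in> A} \<omega> \<partial>M)"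
    by simp
  also have "\<dots> = (\<integral>\<^sup>+\<omega>. ?w True \<omega> + ?w False \<omega> \<partial>M)"
  proof (rule nn_integral_cong_AE)
    show "AE \<omega> in M. indicator {\<omega>\<in>space M. N \<omega> = Suc m \<and> proc \<omega> \<in> A} \<omega> = ?w True \<omega> + ?w False \<omega>"
      using AE_X_pos AE_space
    proof eventually_elim
      case (elim \<omega>)
      have weight: "window_weight A m b (\<lambda>n. X n \<omega>)
          = (if N \<omega> = Suc m \<and> sfv_flow \<theta> p (of_bool b) (t - S (Suc m) \<omega>) \<in> A then 1 else 0)" for b
        unfolding window_weight_def count_eq_Suc_iff_window[OF elim(1)]
        by (simp add: indicator_def S_eq_sum)
      have "proc \<omega> = sfv_flow \<theta> p (post (Suc m) \<omega>) (t - S (Suc m) \<omega>)" if "N \<omega> = Suc m"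
        using that by (simp add: proc_eq)
      with post_Suc_01[of m \<omega>] elim(2) show ?case
        by (auto simp: weight is_type_def indicator_def)
    qed
  qed
  also have "\<dots> = (\<integral>\<^sup>+\<omega>. ?w True \<omega> \<partial>M) + (\<integral>\<^sup>+\<omega>. ?w False \<omega> \<partial>M)"
    unfolding is_type_def by (rule nn_integral_add) auto
  also have "\<dots> = (\<integral>\<^sup>+\<xi>. ?d True \<xi> \<partial>lborel) + (\<integral>\<^sup>+\<xi>. ?d False \<xi> \<partial>lborel)"
    by (simp add: nn_integral_is_type_window nn_integral_dens_region)
  also have "\<dots> = (\<integral>\<^sup>+\<xi>. ?d True \<xi> + ?d False \<xi> \<partial>lborel)"
    by (rule nn_integral_add[symmetric]) auto
  also have "\<dots> = (\<integral>\<^sup>+\<xi>. ennreal (sfv_fk \<theta> p x t (Suc m) \<xi>) * indicator A \<xi> \<partial>lborel)"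
    using region_disjoint
    by (intro nn_integral_cong) (auto simp: sfv_fk_Suc_eq indicator_def)
  finally show ?thesis .
qed

lemma measure_count_Suc:
  assumes [measurable]: "A \<in> sets borel"
  shows "measure M {\<omega>\<in>space M. N \<omega> = Suc m \<and> proc \<omega> \<in> A} = (\<integral>\<xi>\<in>A. sfv_fk \<theta> p x t (Suc m) \<xi> \<partial>lborel)"
proof -
  have "measure M {\<omega>\<in>space M. N \<omega> = Suc m \<and> proc \<omega> \<in> A}
      = enn2real (\<integral>\<^sup>+\<xi>. ennreal (sfv_fk \<theta> p x t (Suc m) \<xi>) * indicator A \<xi> \<partial>lborel)"
    by (simp add: measure_def emeasure_count_Suc)
  also have "\<dots> = (\<integral>\<xi>. indicator A \<xi> *\<^sub>R sfv_fk \<theta> p x t (Suc m) \<xi> \<partial>lborel)"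
    by (rule enn2real_nn_integral_eq_integral) (auto simp: sfv_fk_Suc_nonneg indicator_def)
  finally show ?thesis by (simp add: set_lebesgue_integral_def)
qed

lemma emeasure_count_0:
  assumes [measurable]: "A \<in> sets borel"
  shows "emeasure M {\<omega>\<in>space M. N \<omega> = 0 \<and> proc \<omega> \<in> A} = ennreal (exp (- t) * indicator A (sfv_flow \<theta> p x t))"
proof -
  have "emeasure M {\<omega>\<in>space M. N \<omega> = 0 \<and> proc \<omega> \<in> A}
      = emeasure M {\<omega>\<in>space M. t < X 0 \<omega> \<and> sfv_flow \<theta> p x t \<in> A}"
  proof (rule emeasure_eq_AE)
    show "AE \<omega> in M. (\<omega> \<in> {\<omega>\<in>space M. N \<omega> = 0 \<and> proc \<omega> \<in> A})
        = (\<omega> \<in> {\<omega>\<in>space M. t < X 0 \<omega> \<and> sfv_flow \<theta> p x t \<in> A})"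
      using AE_X_pos AE_S_unbounded
    proof eventually_elim
      case (elim \<omega>)
      then have "N \<omega> = 0 \<longleftrightarrow> t < X 0 \<omega>" by (intro count_eq_0_iff) auto
      then show ?case by (auto simp: proc_eq post_def S_0)
    qed
  qed measurable
  also have "\<dots> = ennreal (exp (- t) * indicator A (sfv_flow \<theta> p x t))"
    using emeasure_X_greater[of t 0] t_pos by (cases "sfv_flow \<theta> p x t \<in> A") auto
  finally show ?thesis .
qed

lemma measure_proc:
  assumes [measurable]: "A \<in> sets borel"
  shows "measure M {\<omega>\<in>space M. proc \<omega> \<in> A} = exp (- t) * indicator A (sfv_flow \<theta> p x t)
     + (\<integral>\<xi>\<in>A. (\<Sum>k. sfv_fk \<theta> p x t (Suc k) \<xi>) \<partial>lborel)"
proof -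
  define F where "F n = {\<omega>\<in>space M. N \<omega> = n \<and> proc \<omega> \<in> A}" for n
  define I where "I = (\<integral>\<^sup>+\<xi>. ennreal (\<Sum>k. sfv_fk \<theta> p x t (Suc k) \<xi>) * indicator A \<xi> \<partial>lborel)"
  define a where "a = ennreal (exp (- t) * indicator A (sfv_flow \<theta> p x t))"
  have [measurable]: "F n \<in> sets M" for n unfolding F_def by measurable
  have "emeasure M {\<omega>\<in>space M. proc \<omega> \<in> A} = emeasure M (\<Union>n. F n)"
    by (intro arg_cong[where f="emeasure M"]) (auto simp: F_def)
  also have "\<dots> = (\<Sum>n. emeasure M (F n))"
    by (rule suminf_emeasure[symmetric]) (auto simp: disjoint_family_on_def F_def)
  also have "\<dots> = (\<Sum>j. emeasure M (F (j + 1))) + (\<Sum>j<1. emeasure M (F j))"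
    by (rule suminf_offset) (rule summableI)
  also have "(\<Sum>j<1. emeasure M (F j)) = a"
    by (simp add: F_def a_def emeasure_count_0)
  also have "(\<Sum>j. emeasure M (F (j + 1)))
      = (\<Sum>j. (\<integral>\<^sup>+\<xi>. ennreal (sfv_fk \<theta> p x t (Suc j) \<xi>) * indicator A \<xi> \<partial>lborel))"
    by (simp add: F_def emeasure_count_Suc)
  also have "\<dots> = (\<integral>\<^sup>+\<xi>. (\<Sum>j. ennreal (sfv_fk \<theta> p x t (Suc j) \<xi>) * indicator A \<xi>) \<partial>lborel)"
    by (rule nn_integral_suminf[symmetric]) simp
  also have "\<dots> = I"
    unfolding I_def
    by (intro nn_integral_cong) (simp add: suminf_ennreal2 sfv_fk_Suc_nonneg summable_sfv_fk)
  finally have total: "emeasure M {\<omega>\<in>space M. proc \<omega> \<in> A} = I + a" .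
  then have "I \<noteq> \<infinity>"
    by (auto simp: emeasure_eq_measure)
  moreover have "enn2real I = (\<integral>\<xi>. indicator A \<xi> *\<^sub>R (\<Sum>k. sfv_fk \<theta> p x t (Suc k) \<xi>) \<partial>lborel)"
    unfolding I_def
    by (rule enn2real_nn_integral_eq_integral)
      (auto simp: sfv_fk_Suc_nonneg indicator_def intro!: suminf_nonneg summable_sfv_fk)
  ultimately have "measure M {\<omega>\<in>space M. proc \<omega> \<in> A} = enn2real I + enn2real a"
    unfolding measure_def total by (intro enn2real_plus) (auto simp: a_def less_top)
  then show ?thesis
    by (simp add: \<open>enn2real I = _\<close> a_def set_lebesgue_integral_def)
qed

end

theorem theorem6:
  fixes M :: "'a measure"
    and X U :: "nat \<Rightarrow> 'a \<Rightarrow> real"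
    and \<theta>\<^sub>1 \<theta>\<^sub>2 \<theta> p x t :: real
  assumes "prob_space M"
    and "prob_space.indep_vars M (\<lambda>_. borel)
           (\<lambda>i. case i of Inl n \<Rightarrow> X n | Inr n \<Rightarrow> U n) (UNIV :: (nat + nat) set)"
    and "\<And>n. distributed M lborel (X n) (exponential_density 1)"
    and "\<And>n. distributed M lborel (U n) (\<lambda>u. indicator {0..1} u / measure lborel {0..1::real})"
    and "0 < \<theta>\<^sub>1" and "0 < \<theta>\<^sub>2"
    and "\<theta> = \<theta>\<^sub>1 + \<theta>\<^sub>2" and "p = \<theta>\<^sub>1 / \<theta>"
    and "0 \<le> x" and "x \<le> 1" and "0 < t"
  shows "(\<forall>k\<ge>1. \<forall>A\<in>sets borel.
            measure M {\<omega>\<in>space M. sfv_count X t \<omega> = k \<and> sfv_proc \<theta> p x X U t \<omega> \<in> A}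
              = (\<integral>\<xi>\<in>A. sfv_fk \<theta> p x t k \<xi> \<partial>lborel))
       \<and> (\<forall>A\<in>sets borel.
            measure M {\<omega>\<in>space M. sfv_proc \<theta> p x X U t \<omega> \<in> A}
              = exp (- t) * indicator A (sfv_flow \<theta> p x t)
                + (\<integral>\<xi>\<in>A. (\<Sum>k. sfv_fk \<theta> p x t (Suc k) \<xi>) \<partial>lborel))"
proof -
  have "0 < p" "p < 1"
    using assms by (simp_all add: divide_less_eq)
  then interpret star_fleming_viot M X U \<theta> p x t
    by (intro star_fleming_viot.intro[OF assms(1)] star_fleming_viot_axioms.intro) (use assms in auto)
  show ?thesis
  proof (intro conjI allI impI ballI)
    fix k :: nat and A :: "real set"
    assume "1 \<le> k" "A \<in> sets borel"
    then show "measure M {\<omega>\<in>space M. sfv_count X t \<omega> = k \<and> sfv_proc \<theta> p x X U t \<omega> \<in> A}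
        = (\<integral>\<xi>\<in>A. sfv_fk \<theta> p x t k \<xi> \<partial>lborel)"
      using measure_count_Suc[of A "k - 1"] by simp
  qed (rule measure_proc)
qed

end
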